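(* Let $\rho$ be a state of $A$ and $\sigma$ a state of $B$ (with $d_R=d_B$). If there exists a family of $G$-covariant channels $\{\mathcal{E}^\eta\}$ from $A$ to $B$, parametrized by the states $\eta$ on $\mathcal{H}_R$, such that $\langle\eta,\mathcal{E}^\eta(\rho)\rangle\ge\langle\eta,\sigma\rangle$ for all states $\eta$, then there exists a $G$-covariant channel from $A$ to $B$ mapping $\rho$ to $\sigma$. Here $\langle X,Y\rangle=\mathrm{tr}[X^\dagger Y]$.
   Context: $G$ is a compact group; finite-dimensional systems $A,B$ carry continuous unitary representations $U_A,U_B$, and $\mathcal{H}_R$ is a Hilbert space of the same dimension as $\mathcal{H}_B$, identified with it via a fixed basis. A channel $\mathcal{E}$ from $A$ to $B$ is $G$-covariant if $\mathcal{E}(U_A(g)XU_A(g)^\dagger)=U_B(g)\mathcal{E}(X)U_B(g)^\dagger$ for all $g,X$. *)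

theory Defs
  imports "Jordan_Normal_Form.Matrix" "HOL-Algebra.Group" "HOL-Analysis.Product_Topology" "HOL-Analysis.T1_Spaces"
begin

definition mtrace :: "complex mat \<Rightarrow> complex" where
  "mtrace A = (\<Sum>i<dim_row A. A $$ (i, i))"

definition adj :: "complex mat \<Rightarrow> complex mat" where
  "adj A = mat (dim_col A) (dim_row A) (\<lambda>(i, j). cnj (A $$ (j, i)))"

definition hs_inner :: "complex mat \<Rightarrow> complex mat \<Rightarrow> complex" where
  "hs_inner X Y = mtrace (adj X * Y)"

definition psd :: "nat \<Rightarrow> complex mat \<Rightarrow> bool" where
  "psd n A \<longleftrightarrow> A \<in> carrier_mat n n \<and>
     (\<forall>v \<in> carrier_vec n. Im ((A *\<^sub>v v) \<bullet>c v) = 0 \<and> Re ((A *\<^sub>v v) \<bullet>c v) \<ge> 0)"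

definition is_state :: "nat \<Rightarrow> complex mat \<Rightarrow> bool" where
  "is_state n \<rho> \<longleftrightarrow> psd n \<rho> \<and> mtrace \<rho> = 1"

definition unitary_mat :: "nat \<Rightarrow> complex mat \<Rightarrow> bool" where
  "unitary_mat n U \<longleftrightarrow> U \<in> carrier_mat n n \<and> adj U * U = 1\<^sub>m n \<and> U * adj U = 1\<^sub>m n"

definition linear_map_mat :: "nat \<Rightarrow> nat \<Rightarrow> (complex mat \<Rightarrow> complex mat) \<Rightarrow> bool" where
  "linear_map_mat d1 d2 E \<longleftrightarrow>
     (\<forall>X \<in> carrier_mat d1 d1. E X \<in> carrier_mat d2 d2) \<and>
     (\<forall>X \<in> carrier_mat d1 d1. \<forall>Y \<in> carrier_mat d1 d1. E (X + Y) = E X + E Y) \<and>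
     (\<forall>c. \<forall>X \<in> carrier_mat d1 d1. E (c \<cdot>\<^sub>m X) = c \<cdot>\<^sub>m E X)"

text \<open>The (k,l) block of size d x d of a matrix on C^n (x) C^d, with basis index k*d + r.\<close>
definition block_of :: "nat \<Rightarrow> complex mat \<Rightarrow> nat \<Rightarrow> nat \<Rightarrow> complex mat" where
  "block_of d X k l = mat d d (\<lambda>(r, s). X $$ (k * d + r, l * d + s))"

text \<open>Ampliation  id_n (x) E  acting blockwise on (n*d1) x (n*d1) matrices.\<close>
definition ampliation :: "nat \<Rightarrow> nat \<Rightarrow> nat \<Rightarrow> (complex mat \<Rightarrow> complex mat) \<Rightarrow> complex mat \<Rightarrow> complex mat" where
  "ampliation n d1 d2 E X =
     mat (n * d2) (n * d2) (\<lambda>(i, j). E (block_of d1 X (i div d2) (j div d2)) $$ (i mod d2, j mod d2))"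

definition completely_positive :: "nat \<Rightarrow> nat \<Rightarrow> (complex mat \<Rightarrow> complex mat) \<Rightarrow> bool" where
  "completely_positive d1 d2 E \<longleftrightarrow>
     (\<forall>n. \<forall>X. psd (n * d1) X \<longrightarrow> psd (n * d2) (ampliation n d1 d2 E X))"

definition trace_preserving :: "nat \<Rightarrow> (complex mat \<Rightarrow> complex mat) \<Rightarrow> bool" where
  "trace_preserving d1 E \<longleftrightarrow> (\<forall>X \<in> carrier_mat d1 d1. mtrace (E X) = mtrace X)"

definition is_channel :: "nat \<Rightarrow> nat \<Rightarrow> (complex mat \<Rightarrow> complex mat) \<Rightarrow> bool" where
  "is_channel d1 d2 E \<longleftrightarrow>
     linear_map_mat d1 d2 E \<and> completely_positive d1 d2 E \<and> trace_preserving d1 E"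

definition compact_group :: "('g, 'b) monoid_scheme \<Rightarrow> 'g topology \<Rightarrow> bool" where
  "compact_group G T \<longleftrightarrow> group G \<and> topspace T = carrier G \<and> compact_space T \<and> Hausdorff_space T \<and>
     continuous_map (prod_topology T T) T (\<lambda>(g, h). g \<otimes>\<^bsub>G\<^esub> h) \<and>
     continuous_map T T (\<lambda>g. inv\<^bsub>G\<^esub> g)"

definition cont_unitary_rep :: "('g, 'b) monoid_scheme \<Rightarrow> 'g topology \<Rightarrow> nat \<Rightarrow> ('g \<Rightarrow> complex mat) \<Rightarrow> bool" where
  "cont_unitary_rep G T d U \<longleftrightarrow>
     (\<forall>g \<in> carrier G. unitary_mat d (U g)) \<and>
     (\<forall>g \<in> carrier G. \<forall>h \<in> carrier G. U (g \<otimes>\<^bsub>G\<^esub> h) = U g * U h) \<and>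
     (\<forall>i < d. \<forall>j < d. continuous_map T euclidean (\<lambda>g. U g $$ (i, j)))"

definition covariant :: "('g, 'b) monoid_scheme \<Rightarrow> nat \<Rightarrow> ('g \<Rightarrow> complex mat) \<Rightarrow> ('g \<Rightarrow> complex mat)
    \<Rightarrow> (complex mat \<Rightarrow> complex mat) \<Rightarrow> bool" where
  "covariant G dA UA UB E \<longleftrightarrow>
     (\<forall>g \<in> carrier G. \<forall>X \<in> carrier_mat dA dA.
        E (UA g * X * adj (UA g)) = UB g * E X * adj (UB g))"

end

theory Submission
  imports Defs "HOL-Analysis.Elementary_Metric_Spaces"
begin

(* Among the G-covariant channels, a convex set that is compact for entrywise convergence,
   choose E0 minimising the Hilbert-Schmidt distance from E0 rho to sigma, and put
   h = E0 rho - sigma.  Minimality along the segment towards any other covariant channel E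
   gives Re <h, E rho> >= Re <h, E0 rho>.  As h is a traceless difference of states,
   eta = (c 1 - h) / (c dB) is a state for large c, and on matrices of equal trace
   <eta, .> reverses the order given by Re <h, .>; so the hypothesis at this eta yields
   Re <h, E^eta rho> <= Re <h, sigma>.  Hence |h|^2 = Re <h, E0 rho> - Re <h, sigma> <= 0,
   i.e. E0 rho = sigma. *)

section \<open>Quadratic forms and the Hilbert--Schmidt inner product\<close>

lemma quadratic_form_expand:
  assumes "A \<in> carrier_mat n n" and "v \<in> carrier_vec n"
  shows "(A *\<^sub>v v) \<bullet>c v = (\<Sum>i<n. \<Sum>j<n. A $$ (i,j) * v $ j * cnj (v $ i))"
  using assms
  by (auto simp: scalar_prod_def mult_mat_vec_def row_def sum_distrib_right atLeast0LessThan
      intro!: sum.cong)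

lemma sum_two_deltas:
  fixes f :: "nat \<Rightarrow> complex"
  assumes "a < n" and "b < n"
  shows "(\<Sum>j<n. f j * ((if j = a then x else 0) + (if j = b then y else 0))) = f a * x + f b * y"
  using assms by (simp add: distrib_left sum.distrib if_distrib[of "\<lambda>z. f _ * z"] cong: if_cong)

lemma quadratic_form_two_units:
  fixes x y :: complex
  assumes P: "P \<in> carrier_mat n n" and ab: "a < n" "b < n"
  defines "v \<equiv> x \<cdot>\<^sub>v unit_vec n a + y \<cdot>\<^sub>v unit_vec n b"
  shows "(P *\<^sub>v v) \<bullet>c v
    = P $$ (a,a) * x * cnj x + P $$ (a,b) * y * cnj x + P $$ (b,a) * x * cnj y + P $$ (b,b) * y * cnj y"
proof -
  have v: "v \<in> carrier_vec n" unfolding v_def by simp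
  have vj: "v $ j = (if j = a then x else 0) + (if j = b then y else 0)" if "j < n" for j
    using that by (simp add: v_def unit_vec_def)
  have "(P *\<^sub>v v) \<bullet>c v = (\<Sum>i<n. (\<Sum>j<n. P $$ (i,j) * v $ j) * cnj (v $ i))"
    unfolding quadratic_form_expand[OF P v] by (simp add: sum_distrib_right)
  also have "\<dots> = (\<Sum>i<n. (P $$ (i,a) * x + P $$ (i,b) * y) *
      ((if i = a then cnj x else 0) + (if i = b then cnj y else 0)))"
    using sum_two_deltas[OF ab] by (intro sum.cong refl) (simp add: vj)
  also have "\<dots> = (P $$ (a,a) * x + P $$ (a,b) * y) * cnj x + (P $$ (b,a) * x + P $$ (b,b) * y) * cnj y"
    by (rule sum_two_deltas[OF ab])
  finally show ?thesis by (simp add: algebra_simps)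
qed

lemma index_mult_mat_sum:
  assumes "A \<in> carrier_mat n m" and "B \<in> carrier_mat m p" and "i < n" and "j < p"
  shows "(A * B) $$ (i,j) = (\<Sum>c<m. A $$ (i,c) * B $$ (c,j))"
  using assms by (simp add: scalar_prod_def atLeast0LessThan)

lemma adj_carrier: "U \<in> carrier_mat n n \<Longrightarrow> adj U \<in> carrier_mat n n"
  unfolding adj_def by auto

lemma hs_inner_expand:
  assumes A: "A \<in> carrier_mat n n" and X: "X \<in> carrier_mat n n"
  shows "hs_inner A X = (\<Sum>a<n. \<Sum>b<n. cnj (A $$ (a,b)) * X $$ (a,b))"
proof -
  have "hs_inner A X = (\<Sum>i<n. \<Sum>c<n. adj A $$ (i,c) * X $$ (c,i))"
    unfolding hs_inner_def mtrace_def using adj_carrier[OF A] X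
    by (intro sum.cong refl index_mult_mat_sum[OF adj_carrier[OF A] X]) auto
  also have "\<dots> = (\<Sum>i<n. \<Sum>c<n. cnj (A $$ (c,i)) * X $$ (c,i))"
    using A by (intro sum.cong refl) (simp add: adj_def)
  also have "\<dots> = (\<Sum>a<n. \<Sum>b<n. cnj (A $$ (a,b)) * X $$ (a,b))"
    by (rule sum.swap)
  finally show ?thesis .
qed

lemma hs_inner_diff_right:
  assumes "A \<in> carrier_mat n n" and "X \<in> carrier_mat n n" and "Y \<in> carrier_mat n n"
  shows "hs_inner A (X - Y) = hs_inner A X - hs_inner A Y"
  unfolding hs_inner_expand[OF assms(1) minus_carrier_mat[OF assms(3)]]
    hs_inner_expand[OF assms(1,2)] hs_inner_expand[OF assms(1,3)]
  using assms by (simp add: sum_subtractf right_diff_distrib)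

definition hs_norm2 :: "complex mat \<Rightarrow> real" where
  "hs_norm2 X = Re (hs_inner X X)"

lemma hs_norm2_expand:
  assumes "X \<in> carrier_mat n n"
  shows "hs_norm2 X = (\<Sum>a<n. \<Sum>b<n. (cmod (X $$ (a,b)))\<^sup>2)"
  unfolding hs_norm2_def hs_inner_expand[OF assms assms]
  by (simp add: Re_sum cmod_power2 power2_eq_square[symmetric])

lemma hs_norm2_diff_nonpos_imp_eq:
  assumes X: "X \<in> carrier_mat n n" and Y: "Y \<in> carrier_mat n n" and "hs_norm2 (X - Y) \<le> 0"
  shows "X = Y"
proof (rule eq_matI)
  have "0 \<le> (\<Sum>a<n. \<Sum>b<n. (cmod ((X - Y) $$ (a,b)))\<^sup>2)"
    by (intro sum_nonneg) auto
  then have "(\<Sum>a<n. \<Sum>b<n. (cmod ((X - Y) $$ (a,b)))\<^sup>2) = 0"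
    using assms hs_norm2_expand[OF minus_carrier_mat[OF Y], of X] by linarith
  then have "(cmod ((X - Y) $$ (a,b)))\<^sup>2 = 0" if "a < n" "b < n" for a b
    using that by (simp add: sum_nonneg_eq_0_iff sum_nonneg)
  then show "X $$ (a,b) = Y $$ (a,b)" if "a < dim_row Y" "b < dim_col Y" for a b
    using that X Y by auto
qed (use X Y in auto)

lemma tendsto_hs_norm2:
  assumes "\<And>k. A k \<in> carrier_mat n n" and "B \<in> carrier_mat n n"
    and "\<And>a b. a < n \<Longrightarrow> b < n \<Longrightarrow> (\<lambda>k. A k $$ (a,b)) \<longlonglongrightarrow> B $$ (a,b)"
  shows "(\<lambda>k. hs_norm2 (A k)) \<longlonglongrightarrow> hs_norm2 B"
  unfolding hs_norm2_expand[OF assms(1)] hs_norm2_expand[OF assms(2)]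
  by (intro tendsto_sum tendsto_power tendsto_norm assms(3)) auto

definition mat_unit :: "nat \<Rightarrow> nat \<Rightarrow> nat \<Rightarrow> complex mat" where
  "mat_unit n k l = mat n n (\<lambda>(i,j). if i = k \<and> j = l then 1 else 0)"

lemma linear_map_mat_zero:
  assumes "linear_map_mat d1 d2 E"
  shows "E (0\<^sub>m d1 d1) = 0\<^sub>m d2 d2"
proof -
  have E0: "E (0\<^sub>m d1 d1) \<in> carrier_mat d2 d2"
    using assms zero_carrier_mat unfolding linear_map_mat_def by blast
  have "E (0\<^sub>m d1 d1) = E (0 \<cdot>\<^sub>m 0\<^sub>m d1 d1)" by simp
  also have "\<dots> = 0 \<cdot>\<^sub>m E (0\<^sub>m d1 d1)"
    using assms zero_carrier_mat unfolding linear_map_mat_def by blast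
  also have "\<dots> = 0\<^sub>m d2 d2"
    using E0 by (intro eq_matI) auto
  finally show ?thesis .
qed

lemma linear_map_mat_entry_expand:
  assumes E: "linear_map_mat d1 d2 E" and X: "X \<in> carrier_mat d1 d1" and ab: "a < d2" "b < d2"
  shows "E X $$ (a,b) = (\<Sum>(k,l)\<in>{..<d1}\<times>{..<d1}. X $$ (k,l) * E (mat_unit d1 k l) $$ (a,b))"
proof -
  define part where "part S = mat d1 d1 (\<lambda>p. if p \<in> S then X $$ p else 0)" for S
  have E_carrier: "\<And>Y. Y \<in> carrier_mat d1 d1 \<Longrightarrow> E Y \<in> carrier_mat d2 d2"
    and E_add: "\<And>Y Z. Y \<in> carrier_mat d1 d1 \<Longrightarrow> Z \<in> carrier_mat d1 d1 \<Longrightarrow> E (Y + Z) = E Y + E Z"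
    and E_smult: "\<And>c Y. Y \<in> carrier_mat d1 d1 \<Longrightarrow> E (c \<cdot>\<^sub>m Y) = c \<cdot>\<^sub>m E Y"
    using E unfolding linear_map_mat_def by blast+
  have partial: "E (part S) $$ (a,b) = (\<Sum>(k,l)\<in>S. X $$ (k,l) * E (mat_unit d1 k l) $$ (a,b))"
    if "finite S" for S
    using that
  proof (induction S rule: finite_induct)
    case empty
    have "part {} = 0\<^sub>m d1 d1" by (auto simp: part_def intro!: eq_matI)
    then show ?case using linear_map_mat_zero[OF E] ab by simp
  next
    case (insert p S)
    obtain k l where p: "p = (k,l)" by fastforce
    have part_S: "part S \<in> carrier_mat d1 d1" and unit: "mat_unit d1 k l \<in> carrier_mat d1 d1"
      by (simp_all add: part_def mat_unit_def)
    have "part (insert p S) = part S + X $$ p \<cdot>\<^sub>m mat_unit d1 k l"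
      using insert.hyps(2) by (auto simp: part_def mat_unit_def p intro!: eq_matI)
    then have "E (part (insert p S)) = E (part S) + X $$ p \<cdot>\<^sub>m E (mat_unit d1 k l)"
      by (simp add: E_add E_smult part_S unit)
    then show ?case
      using insert ab E_carrier[OF part_S] E_carrier[OF unit] by (simp add: p)
  qed
  have "part ({..<d1}\<times>{..<d1}) = X"
    using X by (auto simp: part_def intro!: eq_matI)
  then show ?thesis using partial[of "{..<d1}\<times>{..<d1}"] by simp
qed

section \<open>Positive semidefinite matrices\<close>

lemma psd_carrier: "psd n P \<Longrightarrow> P \<in> carrier_mat n n"
  unfolding psd_def by blast

lemma is_state_carrier: "is_state n \<rho> \<Longrightarrow> \<rho> \<in> carrier_mat n n"
  unfolding is_state_def psd_def by blast

lemma psdD: "psd n P \<Longrightarrow> v \<in> carrier_vec n \<Longrightarrow> Im ((P *\<^sub>v v) \<bullet>c v) = 0 \<and> 0 \<le> Re ((P *\<^sub>v v) \<bullet>c v)"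
  unfolding psd_def by blast

lemma psd_diag:
  assumes "psd n P" and "a < n"
  shows "Im (P $$ (a,a)) = 0" and "0 \<le> Re (P $$ (a,a))"
  using psdD[OF assms(1), of "1 \<cdot>\<^sub>v unit_vec n a + 0 \<cdot>\<^sub>v unit_vec n a"]
    quadratic_form_two_units[OF psd_carrier[OF assms(1)] assms(2) assms(2), of 1 0]
  by auto

lemma psd_entry_bound:
  assumes P: "psd n P" and ab: "a < n" "b < n"
  shows "cmod (P $$ (a,b)) \<le> Re (P $$ (a,a)) + Re (P $$ (b,b))"
proof -
  \<comment> \<open>test \<open>P\<close> against the vectors \<open>e\<^sub>a + w e\<^sub>b\<close> for \<open>w \<in> {1, -1, \<i>, -\<i>}\<close>\<close>
  have test: "Im q = 0 \<and> 0 \<le> Re q"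
    if "q = P $$ (a,a) + P $$ (a,b) * w + P $$ (b,a) * cnj w + P $$ (b,b) * w * cnj w" for w q
    using psdD[OF P, of "1 \<cdot>\<^sub>v unit_vec n a + w \<cdot>\<^sub>v unit_vec n b"]
      quadratic_form_two_units[OF psd_carrier[OF P] ab, of 1 w] that
    by simp
  have "\<bar>Re (P $$ (a,b))\<bar> + \<bar>Im (P $$ (a,b))\<bar> \<le> Re (P $$ (a,a)) + Re (P $$ (b,b))"
    using test[OF refl, of 1] test[OF refl, of "-1"] test[OF refl, of \<i>] test[OF refl, of "-\<i>"]
      psd_diag[OF P ab(1)] psd_diag[OF P ab(2)]
    by (simp add: abs_le_iff; linarith)
  then show ?thesis using cmod_le[of "P $$ (a,b)"] by linarith
qed

lemma psd_diag_le_trace: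
  assumes "psd n P" and "a < n"
  shows "Re (P $$ (a,a)) \<le> Re (mtrace P)"
proof -
  have "Re (P $$ (a,a)) \<le> (\<Sum>i<n. Re (P $$ (i,i)))"
    by (rule member_le_sum) (use assms psd_diag in auto)
  also have "\<dots> = Re (mtrace P)"
    using psd_carrier[OF assms(1)] unfolding mtrace_def by (simp add: Re_sum)
  finally show ?thesis .
qed

lemma psd_add:
  assumes A: "psd n A" and B: "psd n B"
  shows "psd n (A + B)"
  unfolding psd_def
proof (intro conjI ballI)
  show AB: "A + B \<in> carrier_mat n n" using psd_carrier[OF A] psd_carrier[OF B] by simp
  fix v :: "complex vec" assume v: "v \<in> carrier_vec n"
  have "((A + B) *\<^sub>v v) \<bullet>c v = (A *\<^sub>v v) \<bullet>c v + (B *\<^sub>v v) \<bullet>c v"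
    using psd_carrier[OF A] psd_carrier[OF B]
    unfolding quadratic_form_expand[OF AB v] quadratic_form_expand[OF psd_carrier[OF A] v]
      quadratic_form_expand[OF psd_carrier[OF B] v]
    by (simp add: sum.distrib[symmetric] distrib_right)
  then show "Im (((A + B) *\<^sub>v v) \<bullet>c v) = 0" "0 \<le> Re (((A + B) *\<^sub>v v) \<bullet>c v)"
    using psdD[OF A v] psdD[OF B v] by simp_all
qed

lemma psd_smult:
  assumes A: "psd n A" and "0 \<le> r"
  shows "psd n (complex_of_real r \<cdot>\<^sub>m A)"
  unfolding psd_def
proof (intro conjI ballI)
  show rA: "complex_of_real r \<cdot>\<^sub>m A \<in> carrier_mat n n" using psd_carrier[OF A] by simp
  fix v :: "complex vec" assume v: "v \<in> carrier_vec n"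
  have "((complex_of_real r \<cdot>\<^sub>m A) *\<^sub>v v) \<bullet>c v = complex_of_real r * ((A *\<^sub>v v) \<bullet>c v)"
    using psd_carrier[OF A]
    unfolding quadratic_form_expand[OF rA v] quadratic_form_expand[OF psd_carrier[OF A] v]
    by (simp add: sum_distrib_left mult.assoc)
  then show "Im (((complex_of_real r \<cdot>\<^sub>m A) *\<^sub>v v) \<bullet>c v) = 0"
    "0 \<le> Re (((complex_of_real r \<cdot>\<^sub>m A) *\<^sub>v v) \<bullet>c v)"
    using psdD[OF A v] \<open>0 \<le> r\<close> by simp_all
qed

lemma psd_entrywise_limit:
  assumes psd: "\<And>k. psd n (A k)" and B: "B \<in> carrier_mat n n"
    and lim: "\<And>i j. i < n \<Longrightarrow> j < n \<Longrightarrow> (\<lambda>k. A k $$ (i,j)) \<longlonglongrightarrow> B $$ (i,j)"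
  shows "psd n B"
  unfolding psd_def
proof (intro conjI ballI B)
  fix v :: "complex vec" assume v: "v \<in> carrier_vec n"
  have "(\<lambda>k. (A k *\<^sub>v v) \<bullet>c v) \<longlonglongrightarrow> (B *\<^sub>v v) \<bullet>c v"
    unfolding quadratic_form_expand[OF psd_carrier[OF psd] v] quadratic_form_expand[OF B v]
    by (intro tendsto_sum tendsto_mult lim tendsto_const) auto
  then have Im: "(\<lambda>k. Im ((A k *\<^sub>v v) \<bullet>c v)) \<longlonglongrightarrow> Im ((B *\<^sub>v v) \<bullet>c v)"
    and Re: "(\<lambda>k. Re ((A k *\<^sub>v v) \<bullet>c v)) \<longlonglongrightarrow> Re ((B *\<^sub>v v) \<bullet>c v)"
    by (auto intro: tendsto_Im tendsto_Re)
  show "Im ((B *\<^sub>v v) \<bullet>c v) = 0"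
    using Im psdD[OF psd v] by (simp add: LIMSEQ_const_iff)
  show "0 \<le> Re ((B *\<^sub>v v) \<bullet>c v)"
    by (rule LIMSEQ_le_const[OF Re]) (use psdD[OF psd v] in auto)
qed

lemma psd_mat_unit_diag:
  assumes "k < n"
  shows "psd n (mat_unit n k k)"
  unfolding psd_def
proof (intro conjI ballI)
  show U: "mat_unit n k k \<in> carrier_mat n n" by (simp add: mat_unit_def)
  fix v :: "complex vec" assume v: "v \<in> carrier_vec n"
  have row: "(\<Sum>j<n. mat_unit n k k $$ (i,j) * v $ j * cnj (v $ i))
      = (if i = k then v $ k * cnj (v $ k) else 0)" if "i < n" for i
    using assms that by (cases "i = k") (simp_all add: mat_unit_def if_distrib[of "\<lambda>z. z * _"] cong: if_cong)
  have "(mat_unit n k k *\<^sub>v v) \<bullet>c v = v $ k * cnj (v $ k)"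
    using assms unfolding quadratic_form_expand[OF U v] by (simp add: row)
  also have "\<dots> = complex_of_real ((cmod (v $ k))\<^sup>2)"
    by (rule complex_norm_square[symmetric])
  finally show "Im ((mat_unit n k k *\<^sub>v v) \<bullet>c v) = 0" "0 \<le> Re ((mat_unit n k k *\<^sub>v v) \<bullet>c v)"
    by simp_all
qed

lemma quadratic_form_norm_bound:
  assumes A: "A \<in> carrier_mat n n" and v: "v \<in> carrier_vec n"
  shows "cmod ((A *\<^sub>v v) \<bullet>c v) \<le> (\<Sum>i<n. \<Sum>j<n. cmod (A $$ (i,j))) * (\<Sum>i<n. (cmod (v $ i))\<^sup>2)"
proof -
  define N where "N = (\<Sum>i<n. (cmod (v $ i))\<^sup>2)"
  have sq: "(cmod (v $ i))\<^sup>2 \<le> N" if "i < n" for i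
    unfolding N_def by (rule member_le_sum) (use that in auto)
  have prod: "cmod (v $ j) * cmod (v $ i) \<le> N" if "i < n" "j < n" for i j
    using sum_squares_bound[of "cmod (v $ j)" "cmod (v $ i)"] sq[OF that(1)] sq[OF that(2)]
    by (simp add: power2_eq_square field_simps)
  have "cmod ((A *\<^sub>v v) \<bullet>c v) \<le> (\<Sum>i<n. \<Sum>j<n. cmod (A $$ (i,j) * v $ j * cnj (v $ i)))"
    unfolding quadratic_form_expand[OF A v]
    by (rule order_trans[OF norm_sum sum_mono[OF norm_sum]])
  also have "\<dots> \<le> (\<Sum>i<n. \<Sum>j<n. cmod (A $$ (i,j)) * N)"
    by (intro sum_mono) (simp add: norm_mult mult.assoc mult_left_mono prod)
  finally show ?thesis by (simp add: N_def sum_distrib_right)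
qed

lemma psd_shift_diff:
  assumes \<tau>: "psd n \<tau>" and \<sigma>: "psd n \<sigma>" and c: "(\<Sum>i<n. \<Sum>j<n. cmod ((\<tau> - \<sigma>) $$ (i,j))) \<le> c"
  shows "psd n (complex_of_real c \<cdot>\<^sub>m 1\<^sub>m n - (\<tau> - \<sigma>))"
  unfolding psd_def
proof (intro conjI ballI)
  have h: "\<tau> - \<sigma> \<in> carrier_mat n n" by (rule minus_carrier_mat[OF psd_carrier[OF \<sigma>]])
  show M: "complex_of_real c \<cdot>\<^sub>m 1\<^sub>m n - (\<tau> - \<sigma>) \<in> carrier_mat n n"
    by (rule minus_carrier_mat[OF h])
  fix v :: "complex vec" assume v: "v \<in> carrier_vec n"
  define N where "N = (\<Sum>i<n. (cmod (v $ i))\<^sup>2)"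
  define q where "q = ((\<tau> - \<sigma>) *\<^sub>v v) \<bullet>c v"
  have q: "q = (\<tau> *\<^sub>v v) \<bullet>c v - (\<sigma> *\<^sub>v v) \<bullet>c v"
    using psd_carrier[OF \<tau>] psd_carrier[OF \<sigma>]
    unfolding q_def quadratic_form_expand[OF h v] quadratic_form_expand[OF psd_carrier[OF \<tau>] v]
      quadratic_form_expand[OF psd_carrier[OF \<sigma>] v]
    by (simp add: sum_subtractf[symmetric] left_diff_distrib)
  have N: "0 \<le> N" unfolding N_def by (intro sum_nonneg) auto
  have "Re q \<le> cmod q" by (rule complex_Re_le_cmod)
  also have "\<dots> \<le> (\<Sum>i<n. \<Sum>j<n. cmod ((\<tau> - \<sigma>) $$ (i,j))) * N"
    unfolding q_def N_def by (rule quadratic_form_norm_bound[OF h v])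
  also have "\<dots> \<le> c * N" by (rule mult_right_mono[OF c N])
  finally have "Re q \<le> c * N" .
  have entry: "(complex_of_real c \<cdot>\<^sub>m 1\<^sub>m n - (\<tau> - \<sigma>)) $$ (i,j)
      = (if i = j then complex_of_real c else 0) - (\<tau> - \<sigma>) $$ (i,j)" if "i < n" "j < n" for i j
    using carrier_matD[OF h] that by simp
  have "((complex_of_real c \<cdot>\<^sub>m 1\<^sub>m n - (\<tau> - \<sigma>)) *\<^sub>v v) \<bullet>c v
      = (\<Sum>i<n. complex_of_real c * (v $ i * cnj (v $ i)) - (\<Sum>j<n. (\<tau> - \<sigma>) $$ (i,j) * v $ j * cnj (v $ i)))"
    unfolding quadratic_form_expand[OF M v]
    by (intro sum.cong refl)
      (simp add: entry left_diff_distrib sum_subtractf if_distrib[of "\<lambda>z. z * _"] cong: if_cong)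
  also have "\<dots> = complex_of_real c * (\<Sum>i<n. v $ i * cnj (v $ i)) - q"
    unfolding q_def quadratic_form_expand[OF h v] by (simp add: sum_subtractf sum_distrib_left)
  also have "(\<Sum>i<n. v $ i * cnj (v $ i)) = complex_of_real N"
    unfolding N_def of_real_sum by (intro sum.cong refl) (rule complex_norm_square[symmetric])
  finally show "Im (((complex_of_real c \<cdot>\<^sub>m 1\<^sub>m n - (\<tau> - \<sigma>)) *\<^sub>v v) \<bullet>c v) = 0"
    "0 \<le> Re (((complex_of_real c \<cdot>\<^sub>m 1\<^sub>m n - (\<tau> - \<sigma>)) *\<^sub>v v) \<bullet>c v)"
    using q psdD[OF \<tau> v] psdD[OF \<sigma> v] \<open>Re q \<le> c * N\<close> by simp_all
qed

section \<open>Channels\<close>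

lemma ampliation_1:
  assumes "X \<in> carrier_mat d1 d1" and "E X \<in> carrier_mat d2 d2"
  shows "ampliation 1 d1 d2 E X = E X"
proof -
  have "block_of d1 X 0 0 = X"
    using assms(1) unfolding block_of_def by (intro eq_matI) auto
  then show ?thesis
    unfolding ampliation_def using assms(2) by (intro eq_matI) auto
qed

lemma channel_psd:
  assumes E: "is_channel d1 d2 E" and X: "psd d1 X"
  shows "psd d2 (E X)"
proof -
  have "E X \<in> carrier_mat d2 d2"
    using E psd_carrier[OF X] unfolding is_channel_def linear_map_mat_def by blast
  moreover have "psd (1 * d2) (ampliation 1 d1 d2 E X)"
    using E X unfolding is_channel_def completely_positive_def by (metis mult_1)
  ultimately show ?thesis using ampliation_1[OF psd_carrier[OF X]] by simp
qed

lemma channel_state: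
  assumes "is_channel d1 d2 E" and "is_state d1 \<rho>"
  shows "is_state d2 (E \<rho>)"
  using assms channel_psd psd_carrier
  unfolding is_state_def is_channel_def trace_preserving_def by metis

text \<open>The unnormalised projector onto \<open>\<Sum>\<^sub>k e\<^sub>k \<otimes> e\<^sub>k\<close>; its \<open>(k,l)\<close> block is \<open>mat_unit d k l\<close>,
  so its ampliation by a map \<open>E\<close> is the Choi matrix of \<open>E\<close>.\<close>
definition max_entangled :: "nat \<Rightarrow> complex mat" where
  "max_entangled d = mat (d*d) (d*d) (\<lambda>(p,q). if p div d = p mod d \<and> q div d = q mod d then 1 else 0)"

lemma max_entangled_psd: "psd (d*d) (max_entangled d)"
  unfolding psd_def
proof (intro conjI ballI)
  show M: "max_entangled d \<in> carrier_mat (d*d) (d*d)" by (simp add: max_entangled_def)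
  fix v :: "complex vec" assume v: "v \<in> carrier_vec (d*d)"
  define diag where "diag p \<longleftrightarrow> p div d = p mod d" for p :: nat
  define s where "s = (\<Sum>j<d*d. if diag j then v $ j else 0)"
  have "(max_entangled d *\<^sub>v v) \<bullet>c v
      = (\<Sum>i<d*d. \<Sum>j<d*d. (if diag i then cnj (v $ i) else 0) * (if diag j then v $ j else 0))"
    unfolding quadratic_form_expand[OF M v]
    by (intro sum.cong refl) (simp add: max_entangled_def diag_def)
  also have "\<dots> = cnj s * s"
  proof -
    have "cnj s = (\<Sum>i<d*d. if diag i then cnj (v $ i) else 0)"
      unfolding s_def cnj_sum by (intro sum.cong) auto
    then show ?thesis by (simp add: s_def sum_product)
  qed
  also have "\<dots> = complex_of_real ((cmod s)\<^sup>2)"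
    by (subst complex_norm_square) (rule mult.commute)
  finally show "Im ((max_entangled d *\<^sub>v v) \<bullet>c v) = 0" "0 \<le> Re ((max_entangled d *\<^sub>v v) \<bullet>c v)"
    by simp_all
qed

lemma mult_add_less_mult:
  fixes k a m n :: nat
  assumes "k < m" and "a < n"
  shows "k * n + a < m * n"
proof -
  have "k * n + a < (k + 1) * n" using assms by simp
  also have "\<dots> \<le> m * n" using assms by (intro mult_le_mono1) simp
  finally show ?thesis .
qed

lemma block_of_max_entangled:
  assumes "k < d" and "l < d"
  shows "block_of d (max_entangled d) k l = mat_unit d k l"
  using assms mult_add_less_mult[OF assms(1)] mult_add_less_mult[OF assms(2)]
  unfolding block_of_def mat_unit_def max_entangled_def by (intro eq_matI) auto

lemma channel_mat_unit_entry_bound: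
  assumes E: "is_channel d1 d2 E" and kl: "k < d1" "l < d1" and ab: "a < d2" "b < d2"
  shows "cmod (E (mat_unit d1 k l) $$ (a,b)) \<le> 2"
proof -
  have choi: "psd (d1 * d2) (ampliation d1 d1 d2 E (max_entangled d1))"
    using E max_entangled_psd unfolding is_channel_def completely_positive_def by blast
  have choi_entry: "ampliation d1 d1 d2 E (max_entangled d1) $$ (k' * d2 + a', l' * d2 + b')
      = E (mat_unit d1 k' l') $$ (a',b')"
    if "k' < d1" "l' < d1" "a' < d2" "b' < d2" for k' l' a' b'
    using that mult_add_less_mult[of k' d1 a' d2] mult_add_less_mult[of l' d1 b' d2]
    unfolding ampliation_def by (simp add: block_of_max_entangled)
  have diag: "Re (E (mat_unit d1 m m) $$ (c,c)) \<le> 1" if "m < d1" "c < d2" for m c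
  proof -
    have "is_state d1 (mat_unit d1 m m)"
      using that psd_mat_unit_diag unfolding is_state_def mtrace_def mat_unit_def by simp
    then show ?thesis
      using channel_state[OF E] psd_diag_le_trace that(2) unfolding is_state_def by fastforce
  qed
  have "cmod (E (mat_unit d1 k l) $$ (a,b))
      \<le> Re (E (mat_unit d1 k k) $$ (a,a)) + Re (E (mat_unit d1 l l) $$ (b,b))"
    using psd_entry_bound[OF choi mult_add_less_mult[OF kl(1) ab(1)] mult_add_less_mult[OF kl(2) ab(2)]]
    by (simp add: choi_entry kl ab)
  also have "\<dots> \<le> 2" using diag[OF kl(1) ab(1)] diag[OF kl(2) ab(2)] by linarith
  finally show ?thesis .
qed

lemma linear_map_mat_lin_comb:
  assumes E: "linear_map_mat d1 d2 E" and F: "linear_map_mat d1 d2 F"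
  shows "linear_map_mat d1 d2 (\<lambda>X. a \<cdot>\<^sub>m E X + b \<cdot>\<^sub>m F X)"
  unfolding linear_map_mat_def
proof (intro conjI ballI allI)
  fix X Y :: "complex mat" and c :: complex
  assume X: "X \<in> carrier_mat d1 d1" and Y: "Y \<in> carrier_mat d1 d1"
  have EX: "E X \<in> carrier_mat d2 d2" "F X \<in> carrier_mat d2 d2"
    and EY: "E Y \<in> carrier_mat d2 d2" "F Y \<in> carrier_mat d2 d2"
    and add: "E (X + Y) = E X + E Y" "F (X + Y) = F X + F Y"
    and smult: "E (c \<cdot>\<^sub>m X) = c \<cdot>\<^sub>m E X" "F (c \<cdot>\<^sub>m X) = c \<cdot>\<^sub>m F X"
    using E F X Y unfolding linear_map_mat_def by blast+
  show "a \<cdot>\<^sub>m E X + b \<cdot>\<^sub>m F X \<in> carrier_mat d2 d2" using EX by simp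
  show "a \<cdot>\<^sub>m E (X + Y) + b \<cdot>\<^sub>m F (X + Y) = (a \<cdot>\<^sub>m E X + b \<cdot>\<^sub>m F X) + (a \<cdot>\<^sub>m E Y + b \<cdot>\<^sub>m F Y)"
    unfolding add using EX EY by (intro eq_matI) (auto simp: algebra_simps)
  show "a \<cdot>\<^sub>m E (c \<cdot>\<^sub>m X) + b \<cdot>\<^sub>m F (c \<cdot>\<^sub>m X) = c \<cdot>\<^sub>m (a \<cdot>\<^sub>m E X + b \<cdot>\<^sub>m F X)"
    unfolding smult using EX by (intro eq_matI) (auto simp: algebra_simps)
qed

lemma ampliation_lin_comb:
  assumes "\<And>Y. Y \<in> carrier_mat d1 d1 \<Longrightarrow> E Y \<in> carrier_mat d2 d2"
    and "\<And>Y. Y \<in> carrier_mat d1 d1 \<Longrightarrow> F Y \<in> carrier_mat d2 d2"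
  shows "ampliation n d1 d2 (\<lambda>Y. a \<cdot>\<^sub>m E Y + b \<cdot>\<^sub>m F Y) X
    = a \<cdot>\<^sub>m ampliation n d1 d2 E X + b \<cdot>\<^sub>m ampliation n d1 d2 F X"
proof (rule eq_matI)
  fix i j assume "i < dim_row (a \<cdot>\<^sub>m ampliation n d1 d2 E X + b \<cdot>\<^sub>m ampliation n d1 d2 F X)"
    and "j < dim_col (a \<cdot>\<^sub>m ampliation n d1 d2 E X + b \<cdot>\<^sub>m ampliation n d1 d2 F X)"
  then have ij: "i < n * d2" "j < n * d2" by (simp_all add: ampliation_def)
  then have "0 < d2" by (cases d2) auto
  then have mod: "i mod d2 < d2" "j mod d2 < d2" by simp_all
  have "block_of d1 X (i div d2) (j div d2) \<in> carrier_mat d1 d1"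
    by (simp add: block_of_def)
  from assms[OF this] show "ampliation n d1 d2 (\<lambda>Y. a \<cdot>\<^sub>m E Y + b \<cdot>\<^sub>m F Y) X $$ (i,j)
      = (a \<cdot>\<^sub>m ampliation n d1 d2 E X + b \<cdot>\<^sub>m ampliation n d1 d2 F X) $$ (i,j)"
    using ij mod unfolding ampliation_def by simp
qed (simp_all add: ampliation_def)

lemma mtrace_lin_comb:
  assumes "A \<in> carrier_mat n n" and "B \<in> carrier_mat n n"
  shows "mtrace (a \<cdot>\<^sub>m A + b \<cdot>\<^sub>m B) = a * mtrace A + b * mtrace B"
  using assms unfolding mtrace_def by (simp add: sum.distrib sum_distrib_left)

lemma is_channel_convex_comb:
  assumes E: "is_channel d1 d2 E" and F: "is_channel d1 d2 F" and t: "0 \<le> t" "t \<le> 1"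
  shows "is_channel d1 d2 (\<lambda>X. complex_of_real t \<cdot>\<^sub>m E X + complex_of_real (1 - t) \<cdot>\<^sub>m F X)"
  unfolding is_channel_def
proof (intro conjI)
  have lin: "linear_map_mat d1 d2 E" "linear_map_mat d1 d2 F"
    using E F unfolding is_channel_def by blast+
  then have car: "\<And>Y. Y \<in> carrier_mat d1 d1 \<Longrightarrow> E Y \<in> carrier_mat d2 d2"
    "\<And>Y. Y \<in> carrier_mat d1 d1 \<Longrightarrow> F Y \<in> carrier_mat d2 d2"
    unfolding linear_map_mat_def by blast+
  show "linear_map_mat d1 d2 (\<lambda>X. complex_of_real t \<cdot>\<^sub>m E X + complex_of_real (1 - t) \<cdot>\<^sub>m F X)"
    using linear_map_mat_lin_comb[OF lin] .
  show "completely_positive d1 d2 (\<lambda>X. complex_of_real t \<cdot>\<^sub>m E X + complex_of_real (1 - t) \<cdot>\<^sub>m F X)"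
    unfolding completely_positive_def
  proof (intro allI impI)
    fix n and X :: "complex mat" assume X: "psd (n * d1) X"
    have "psd (n * d2) (ampliation n d1 d2 E X)" "psd (n * d2) (ampliation n d1 d2 F X)"
      using E F X unfolding is_channel_def completely_positive_def by blast+
    then have "psd (n * d2) (complex_of_real t \<cdot>\<^sub>m ampliation n d1 d2 E X
        + complex_of_real (1 - t) \<cdot>\<^sub>m ampliation n d1 d2 F X)"
      using t by (intro psd_add psd_smult) auto
    then show "psd (n * d2) (ampliation n d1 d2
        (\<lambda>X. complex_of_real t \<cdot>\<^sub>m E X + complex_of_real (1 - t) \<cdot>\<^sub>m F X) X)"
      by (subst ampliation_lin_comb[OF car])
  qed
  show "trace_preserving d1 (\<lambda>X. complex_of_real t \<cdot>\<^sub>m E X + complex_of_real (1 - t) \<cdot>\<^sub>m F X)"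
    unfolding trace_preserving_def
  proof
    fix X :: "complex mat" assume X: "X \<in> carrier_mat d1 d1"
    have "mtrace (E X) = mtrace X" "mtrace (F X) = mtrace X"
      using E F X unfolding is_channel_def trace_preserving_def by blast+
    then show "mtrace (complex_of_real t \<cdot>\<^sub>m E X + complex_of_real (1 - t) \<cdot>\<^sub>m F X) = mtrace X"
      using mtrace_lin_comb[OF car(1)[OF X] car(2)[OF X]] by (simp add: algebra_simps)
  qed
qed

lemma covariant_lin_comb:
  assumes E: "covariant G d1 U1 U2 E" and F: "covariant G d1 U1 U2 F"
    and car: "\<And>X. X \<in> carrier_mat d1 d1 \<Longrightarrow> E X \<in> carrier_mat d2 d2"
      "\<And>X. X \<in> carrier_mat d1 d1 \<Longrightarrow> F X \<in> carrier_mat d2 d2"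
    and U2: "\<And>g. g \<in> carrier G \<Longrightarrow> U2 g \<in> carrier_mat d2 d2"
  shows "covariant G d1 U1 U2 (\<lambda>X. a \<cdot>\<^sub>m E X + b \<cdot>\<^sub>m F X)"
  unfolding covariant_def
proof (intro ballI)
  fix g and X :: "complex mat" assume g: "g \<in> carrier G" and X: "X \<in> carrier_mat d1 d1"
  have U: "U2 g \<in> carrier_mat d2 d2" and U': "adj (U2 g) \<in> carrier_mat d2 d2"
    using U2[OF g] adj_carrier by blast+
  have "U2 g * (a \<cdot>\<^sub>m E X + b \<cdot>\<^sub>m F X) = U2 g * (a \<cdot>\<^sub>m E X) + U2 g * (b \<cdot>\<^sub>m F X)"
    using U car(1)[OF X] car(2)[OF X] by (intro mult_add_distrib_mat[of _ d2 d2]) auto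
  also have "\<dots> = a \<cdot>\<^sub>m (U2 g * E X) + b \<cdot>\<^sub>m (U2 g * F X)"
    using mult_smult_distrib[OF U car(1)[OF X]] mult_smult_distrib[OF U car(2)[OF X]] by simp
  finally have "U2 g * (a \<cdot>\<^sub>m E X + b \<cdot>\<^sub>m F X) = a \<cdot>\<^sub>m (U2 g * E X) + b \<cdot>\<^sub>m (U2 g * F X)" .
  then have "U2 g * (a \<cdot>\<^sub>m E X + b \<cdot>\<^sub>m F X) * adj (U2 g)
      = a \<cdot>\<^sub>m (U2 g * E X) * adj (U2 g) + b \<cdot>\<^sub>m (U2 g * F X) * adj (U2 g)"
    using U U' car(1)[OF X] car(2)[OF X] by (simp add: add_mult_distrib_mat[of _ d2 d2])
  also have "\<dots> = a \<cdot>\<^sub>m (U2 g * E X * adj (U2 g)) + b \<cdot>\<^sub>m (U2 g * F X * adj (U2 g))"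
    using U U' car(1)[OF X] car(2)[OF X] by (simp add: mult_smult_assoc_mat[of _ d2 d2])
  finally have "U2 g * (a \<cdot>\<^sub>m E X + b \<cdot>\<^sub>m F X) * adj (U2 g)
      = a \<cdot>\<^sub>m (U2 g * E X * adj (U2 g)) + b \<cdot>\<^sub>m (U2 g * F X * adj (U2 g))" .
  then show "a \<cdot>\<^sub>m E (U1 g * X * adj (U1 g)) + b \<cdot>\<^sub>m F (U1 g * X * adj (U1 g))
      = U2 g * (a \<cdot>\<^sub>m E X + b \<cdot>\<^sub>m F X) * adj (U2 g)"
    using E F g X unfolding covariant_def by simp
qed

section \<open>Sequential compactness of the covariant channels\<close>

lemma finite_family_convergent_subseq:
  fixes f :: "nat \<Rightarrow> 'i \<Rightarrow> 'a::heine_borel"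
  assumes "finite I" and "\<And>i. i \<in> I \<Longrightarrow> bounded (range (\<lambda>n. f n i))"
  obtains r l where "strict_mono r" and "\<And>i. i \<in> I \<Longrightarrow> (\<lambda>n. f (r n) i) \<longlonglongrightarrow> l i"
proof -
  obtain l r where r: "strict_mono r"
    and lim: "\<forall>\<epsilon>>0. \<forall>\<^sub>F n in sequentially. \<forall>i\<in>I. dist (f (r n) i) (l i) < \<epsilon>"
    using compact_lemma_general[of I "\<lambda>x i. x i" f id] assms by (auto simp: image_image)
  have "(\<lambda>n. f (r n) i) \<longlonglongrightarrow> l i" if "i \<in> I" for i
    unfolding tendsto_iff using lim that by (blast intro: eventually_mono)
  with r that show ?thesis by blast
qed

lemma finite_family_convergent_subseq_complex:
  fixes f :: "nat \<Rightarrow> 'i \<Rightarrow> complex"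
  assumes "finite I" and "\<And>n i. i \<in> I \<Longrightarrow> cmod (f n i) \<le> B"
  obtains r l where "strict_mono r" and "\<And>i. i \<in> I \<Longrightarrow> (\<lambda>n. f (r n) i) \<longlonglongrightarrow> l i"
proof -
  define g where "g n i = (Re (f n i), Im (f n i))" for n i
  have "bounded (range (\<lambda>n. g n i))" if "i \<in> I" for i
    unfolding bounded_iff g_def
    using assms(2)[OF that] by (auto simp: norm_Pair cmod_def)
  then obtain r l where r: "strict_mono r" and lim: "\<And>i. i \<in> I \<Longrightarrow> (\<lambda>n. g (r n) i) \<longlonglongrightarrow> l i"
    using finite_family_convergent_subseq[OF assms(1)] by blast
  have "(\<lambda>n. f (r n) i) \<longlonglongrightarrow> Complex (fst (l i)) (snd (l i))" if "i \<in> I" for i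
    using tendsto_Complex[OF tendsto_fst[OF lim[OF that]] tendsto_snd[OF lim[OF that]]]
    by (simp add: g_def)
  from that[OF r this] show ?thesis .
qed

lemma tendsto_mult_mat_entries:
  fixes M :: "nat \<Rightarrow> complex mat"
  assumes M: "\<And>k. M k \<in> carrier_mat d d" and L: "L \<in> carrier_mat d d"
    and U: "U \<in> carrier_mat d d" and V: "V \<in> carrier_mat d d"
    and lim: "\<And>a b. a < d \<Longrightarrow> b < d \<Longrightarrow> (\<lambda>k. M k $$ (a,b)) \<longlonglongrightarrow> L $$ (a,b)"
    and ab: "a < d" "b < d"
  shows "(\<lambda>k. (U * M k * V) $$ (a,b)) \<longlonglongrightarrow> (U * L * V) $$ (a,b)"
proof -
  have entry: "(U * N * V) $$ (a,b) = (\<Sum>c<d. (\<Sum>e<d. U $$ (a,e) * N $$ (e,c)) * V $$ (c,b))"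
    if N: "N \<in> carrier_mat d d" for N
    using ab index_mult_mat_sum[OF mult_carrier_mat[OF U N] V] index_mult_mat_sum[OF U N]
    by simp
  show ?thesis
    unfolding entry[OF M] entry[OF L]
    by (intro tendsto_sum tendsto_mult_right tendsto_mult_left lim) (use ab in auto)
qed

lemma linear_maps_convergent_subseq:
  fixes Es :: "nat \<Rightarrow> complex mat \<Rightarrow> complex mat"
  assumes lin: "\<And>n. linear_map_mat d1 d2 (Es n)"
    and bound: "\<And>n k l a b. k < d1 \<Longrightarrow> l < d1 \<Longrightarrow> a < d2 \<Longrightarrow> b < d2 \<Longrightarrow>
      cmod (Es n (mat_unit d1 k l) $$ (a,b)) \<le> B"
  obtains r E where "strict_mono r" and "linear_map_mat d1 d2 E"
    and "\<And>X a b. X \<in> carrier_mat d1 d1 \<Longrightarrow> a < d2 \<Longrightarrow> b < d2 \<Longrightarrow>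
      (\<lambda>n. Es (r n) X $$ (a,b)) \<longlonglongrightarrow> E X $$ (a,b)"
proof -
  define I where "I = {..<d1} \<times> {..<d1} \<times> {..<d2} \<times> {..<d2}"
  define f where "f n = (\<lambda>(k,l,a,b). Es n (mat_unit d1 k l) $$ (a,b))" for n
  have "finite I" and "\<And>n i. i \<in> I \<Longrightarrow> cmod (f n i) \<le> B"
    using bound by (auto simp: I_def f_def)
  then obtain r C where r: "strict_mono r" and C: "\<And>i. i \<in> I \<Longrightarrow> (\<lambda>n. f (r n) i) \<longlonglongrightarrow> C i"
    using finite_family_convergent_subseq_complex[of I f B] by blast
  define E where
    "E X = mat d2 d2 (\<lambda>(a,b). \<Sum>(k,l)\<in>{..<d1}\<times>{..<d1}. X $$ (k,l) * C (k,l,a,b))" for X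
  have "linear_map_mat d1 d2 E"
    unfolding linear_map_mat_def
  proof (intro conjI ballI allI)
    fix X Y :: "complex mat" and c :: complex
    assume X: "X \<in> carrier_mat d1 d1" and Y: "Y \<in> carrier_mat d1 d1"
    show "E X \<in> carrier_mat d2 d2" by (simp add: E_def)
    show "E (X + Y) = E X + E Y"
      using X Y by (intro eq_matI) (auto simp: E_def sum.distrib[symmetric] distrib_right intro!: sum.cong)
    show "E (c \<cdot>\<^sub>m X) = c \<cdot>\<^sub>m E X"
      using X by (intro eq_matI) (auto simp: E_def sum_distrib_left mult.assoc intro!: sum.cong)
  qed
  moreover have "(\<lambda>n. Es (r n) X $$ (a,b)) \<longlonglongrightarrow> E X $$ (a,b)"
    if X: "X \<in> carrier_mat d1 d1" and ab: "a < d2" "b < d2" for X a b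
    unfolding linear_map_mat_entry_expand[OF lin X ab] E_def
    using ab C by (auto simp: I_def f_def intro!: tendsto_sum tendsto_mult)
  ultimately show ?thesis using r that by blast
qed

lemma is_channel_entrywise_limit:
  fixes Es :: "nat \<Rightarrow> complex mat \<Rightarrow> complex mat"
  assumes Es: "\<And>n. is_channel d1 d2 (Es n)" and E: "linear_map_mat d1 d2 E"
    and lim: "\<And>X a b. X \<in> carrier_mat d1 d1 \<Longrightarrow> a < d2 \<Longrightarrow> b < d2 \<Longrightarrow>
      (\<lambda>n. Es n X $$ (a,b)) \<longlonglongrightarrow> E X $$ (a,b)"
  shows "is_channel d1 d2 E"
  unfolding is_channel_def
proof (intro conjI E)
  have car: "Es n X \<in> carrier_mat d2 d2" "E X \<in> carrier_mat d2 d2" if "X \<in> carrier_mat d1 d1" for n X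
    using Es E that unfolding is_channel_def linear_map_mat_def by blast+
  show "trace_preserving d1 E"
    unfolding trace_preserving_def
  proof
    fix X :: "complex mat" assume X: "X \<in> carrier_mat d1 d1"
    have "(\<lambda>n. mtrace (Es n X)) \<longlonglongrightarrow> mtrace (E X)"
      using carrier_matD(1)[OF car(1)[OF X]] carrier_matD(1)[OF car(2)[OF X]]
      unfolding mtrace_def by (auto intro!: tendsto_sum lim[OF X])
    moreover have "mtrace (Es n X) = mtrace X" for n
      using Es X unfolding is_channel_def trace_preserving_def by blast
    ultimately show "mtrace (E X) = mtrace X" by (simp add: LIMSEQ_const_iff)
  qed
  show "completely_positive d1 d2 E"
    unfolding completely_positive_def
  proof (intro allI impI)
    fix n and X :: "complex mat" assume X: "psd (n * d1) X"
    show "psd (n * d2) (ampliation n d1 d2 E X)"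
    proof (rule psd_entrywise_limit)
      show "psd (n * d2) (ampliation n d1 d2 (Es k) X)" for k
        using Es X unfolding is_channel_def completely_positive_def by blast
      show "ampliation n d1 d2 E X \<in> carrier_mat (n * d2) (n * d2)" by (simp add: ampliation_def)
      fix i j assume ij: "i < n * d2" "j < n * d2"
      then have "0 < d2" by (cases d2) auto
      then show "(\<lambda>k. ampliation n d1 d2 (Es k) X $$ (i,j)) \<longlonglongrightarrow> ampliation n d1 d2 E X $$ (i,j)"
        using ij unfolding ampliation_def by (simp add: lim block_of_def)
    qed
  qed
qed

lemma covariant_entrywise_limit:
  fixes Es :: "nat \<Rightarrow> complex mat \<Rightarrow> complex mat"
  assumes Es: "\<And>n. covariant G d1 U1 U2 (Es n)"
    and car: "\<And>n X. X \<in> carrier_mat d1 d1 \<Longrightarrow> Es n X \<in> carrier_mat d2 d2"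
      "\<And>X. X \<in> carrier_mat d1 d1 \<Longrightarrow> E X \<in> carrier_mat d2 d2"
    and U1: "\<And>g. g \<in> carrier G \<Longrightarrow> U1 g \<in> carrier_mat d1 d1"
    and U2: "\<And>g. g \<in> carrier G \<Longrightarrow> U2 g \<in> carrier_mat d2 d2"
    and lim: "\<And>X a b. X \<in> carrier_mat d1 d1 \<Longrightarrow> a < d2 \<Longrightarrow> b < d2 \<Longrightarrow>
      (\<lambda>n. Es n X $$ (a,b)) \<longlonglongrightarrow> E X $$ (a,b)"
  shows "covariant G d1 U1 U2 E"
  unfolding covariant_def
proof (intro ballI)
  fix g and X :: "complex mat" assume g: "g \<in> carrier G" and X: "X \<in> carrier_mat d1 d1"
  have Y: "U1 g * X * adj (U1 g) \<in> carrier_mat d1 d1"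
    using U1[OF g] X adj_carrier[OF U1[OF g]] by simp
  show "E (U1 g * X * adj (U1 g)) = U2 g * E X * adj (U2 g)"
  proof (rule eq_matI)
    fix a b assume "a < dim_row (U2 g * E X * adj (U2 g))" "b < dim_col (U2 g * E X * adj (U2 g))"
    then have ab: "a < d2" "b < d2" using U2[OF g] adj_carrier[OF U2[OF g]] by simp_all
    have "(\<lambda>n. Es n (U1 g * X * adj (U1 g)) $$ (a,b)) = (\<lambda>n. (U2 g * Es n X * adj (U2 g)) $$ (a,b))"
      using Es g X unfolding covariant_def by simp
    moreover have "(\<lambda>n. (U2 g * Es n X * adj (U2 g)) $$ (a,b)) \<longlonglongrightarrow> (U2 g * E X * adj (U2 g)) $$ (a,b)"
      by (rule tendsto_mult_mat_entries[OF car(1)[OF X] car(2)[OF X] U2[OF g]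
            adj_carrier[OF U2[OF g]] lim[OF X] ab])
    ultimately show "E (U1 g * X * adj (U1 g)) $$ (a,b) = (U2 g * E X * adj (U2 g)) $$ (a,b)"
      using lim[OF Y ab] LIMSEQ_unique by metis
  qed (use car(2)[OF Y] U2[OF g] adj_carrier[OF U2[OF g]] in simp_all)
qed

lemma covariant_channels_convergent_subseq:
  fixes Es :: "nat \<Rightarrow> complex mat \<Rightarrow> complex mat"
  assumes Es: "\<And>n. is_channel d1 d2 (Es n) \<and> covariant G d1 U1 U2 (Es n)"
    and U1: "\<And>g. g \<in> carrier G \<Longrightarrow> U1 g \<in> carrier_mat d1 d1"
    and U2: "\<And>g. g \<in> carrier G \<Longrightarrow> U2 g \<in> carrier_mat d2 d2"
  obtains r E where "strict_mono r" and "is_channel d1 d2 E" and "covariant G d1 U1 U2 E"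
    and "\<And>X a b. X \<in> carrier_mat d1 d1 \<Longrightarrow> a < d2 \<Longrightarrow> b < d2 \<Longrightarrow>
      (\<lambda>n. Es (r n) X $$ (a,b)) \<longlonglongrightarrow> E X $$ (a,b)"
proof -
  have lin: "linear_map_mat d1 d2 (Es n)" for n
    using Es unfolding is_channel_def by blast
  have bound: "cmod (Es n (mat_unit d1 k l) $$ (a,b)) \<le> 2"
    if "k < d1" "l < d1" "a < d2" "b < d2" for n k l a b
    using channel_mat_unit_entry_bound Es that by blast
  obtain r E where r: "strict_mono r" and E: "linear_map_mat d1 d2 E"
    and lim: "\<And>X a b. X \<in> carrier_mat d1 d1 \<Longrightarrow> a < d2 \<Longrightarrow> b < d2 \<Longrightarrow>
      (\<lambda>n. Es (r n) X $$ (a,b)) \<longlonglongrightarrow> E X $$ (a,b)"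
    using linear_maps_convergent_subseq[where Es = Es, OF lin bound] by blast
  have "is_channel d1 d2 E"
    by (rule is_channel_entrywise_limit[OF _ E lim]) (use Es in blast)
  moreover have "covariant G d1 U1 U2 E"
    by (rule covariant_entrywise_limit[OF _ _ _ U1 U2 lim])
      (use Es lin E in \<open>auto simp: linear_map_mat_def\<close>)
  ultimately show ?thesis using r lim that by blast
qed

section \<open>The nearest covariant channel\<close>

lemma nonneg_of_nonneg_quadratic:
  fixes S W :: real
  assumes "\<And>t. 0 < t \<Longrightarrow> t \<le> 1 \<Longrightarrow> 0 \<le> 2 * t * S + t\<^sup>2 * W"
  shows "0 \<le> S"
proof (rule ccontr)
  assume S: "\<not> 0 \<le> S"
  define t where "t = min 1 (- S / (\<bar>W\<bar> + 1))"
  have t: "0 < t" "t \<le> 1" using S by (auto simp: t_def divide_neg_pos)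
  have "t * W \<le> t * \<bar>W\<bar>" using t by (intro mult_left_mono) auto
  also have "\<dots> \<le> - S / (\<bar>W\<bar> + 1) * \<bar>W\<bar>" by (intro mult_right_mono) (auto simp: t_def)
  also have "\<dots> < - S" using S by (simp add: field_simps)
  finally have "2 * S + t * W < 0" using S by linarith
  have "2 * t * S + t\<^sup>2 * W = t * (2 * S + t * W)" by (simp add: power2_eq_square algebra_simps)
  also have "\<dots> < 0" by (rule mult_pos_neg[OF t(1) \<open>2 * S + t * W < 0\<close>])
  finally show False using assms[OF t] by simp
qed

lemma cmod_add_real_mult_power2:
  "(cmod (h + complex_of_real t * w))\<^sup>2 = (cmod h)\<^sup>2 + 2 * t * Re (cnj h * w) + t\<^sup>2 * (cmod w)\<^sup>2"
  unfolding cmod_power2 by (simp add: power2_eq_square algebra_simps)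

lemma hs_nearest_point_first_order:
  assumes \<tau>0: "\<tau>0 \<in> carrier_mat n n" and \<tau>: "\<tau> \<in> carrier_mat n n" and \<sigma>: "\<sigma> \<in> carrier_mat n n"
    and nearest: "\<And>t. 0 < t \<Longrightarrow> t \<le> 1 \<Longrightarrow> hs_norm2 (\<tau>0 - \<sigma>)
      \<le> hs_norm2 (complex_of_real t \<cdot>\<^sub>m \<tau> + complex_of_real (1 - t) \<cdot>\<^sub>m \<tau>0 - \<sigma>)"
  shows "Re (hs_inner (\<tau>0 - \<sigma>) \<tau>0) \<le> Re (hs_inner (\<tau>0 - \<sigma>) \<tau>)"
proof -
  define h where "h a b = \<tau>0 $$ (a,b) - \<sigma> $$ (a,b)" for a b
  define w where "w a b = \<tau> $$ (a,b) - \<tau>0 $$ (a,b)" for a b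
  define S where "S = (\<Sum>a<n. \<Sum>b<n. Re (cnj (h a b) * w a b))"
  define W where "W = (\<Sum>a<n. \<Sum>b<n. (cmod (w a b))\<^sup>2)"
  have "0 \<le> 2 * t * S + t\<^sup>2 * W" if t: "0 < t" "t \<le> 1" for t
  proof -
    have comb: "complex_of_real t \<cdot>\<^sub>m \<tau> + complex_of_real (1 - t) \<cdot>\<^sub>m \<tau>0 - \<sigma> \<in> carrier_mat n n"
      using \<sigma> by (rule minus_carrier_mat)
    have "hs_norm2 (complex_of_real t \<cdot>\<^sub>m \<tau> + complex_of_real (1 - t) \<cdot>\<^sub>m \<tau>0 - \<sigma>)
        = (\<Sum>a<n. \<Sum>b<n. (cmod (h a b + complex_of_real t * w a b))\<^sup>2)"
      unfolding hs_norm2_expand[OF comb] using carrier_matD[OF \<tau>0] carrier_matD[OF \<tau>] carrier_matD[OF \<sigma>]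
      by (intro sum.cong refl) (simp add: h_def w_def algebra_simps)
    also have "\<dots> = hs_norm2 (\<tau>0 - \<sigma>) + 2 * t * S + t\<^sup>2 * W"
      using \<tau>0 \<sigma> unfolding hs_norm2_expand[OF minus_carrier_mat[OF \<sigma>], of \<tau>0] S_def W_def
      by (simp add: cmod_add_real_mult_power2 h_def sum.distrib sum_distrib_left)
    finally show ?thesis using nearest[OF t] by simp
  qed
  then have "0 \<le> S" by (rule nonneg_of_nonneg_quadratic)
  moreover have "S = Re (hs_inner (\<tau>0 - \<sigma>) (\<tau> - \<tau>0))"
    using \<tau>0 \<tau> \<sigma>
    unfolding hs_inner_expand[OF minus_carrier_mat[OF \<sigma>] minus_carrier_mat[OF \<tau>0]] S_def
    by (simp add: Re_sum h_def w_def)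
  ultimately show ?thesis
    using hs_inner_diff_right[OF minus_carrier_mat[OF \<sigma>] \<tau> \<tau>0] by simp
qed

lemma minimizing_sequence:
  fixes f :: "'a \<Rightarrow> real"
  assumes "C \<noteq> {}" and "bdd_below (f ` C)"
  obtains xs where "\<And>n. xs n \<in> C" and "(\<lambda>n. f (xs n)) \<longlonglongrightarrow> (INF x\<in>C. f x)"
proof -
  have "\<exists>x\<in>C. f x < (INF x\<in>C. f x) + inverse (real (Suc n))" for n
    using cInf_lessD[of "f ` C" "(INF x\<in>C. f x) + inverse (real (Suc n))"] assms(1) by auto
  then obtain xs where xs: "\<And>n. xs n \<in> C" "\<And>n. f (xs n) < (INF x\<in>C. f x) + inverse (real (Suc n))"
    by metis
  have "(\<lambda>n. f (xs n)) \<longlonglongrightarrow> (INF x\<in>C. f x)"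
  proof (rule tendsto_sandwich)
    show "\<forall>\<^sub>F n in sequentially. (INF x\<in>C. f x) \<le> f (xs n)"
      by (intro always_eventually allI cINF_lower[OF assms(2)] xs(1))
    show "\<forall>\<^sub>F n in sequentially. f (xs n) \<le> (INF x\<in>C. f x) + inverse (real (Suc n))"
      by (intro always_eventually allI less_imp_le xs(2))
    show "(\<lambda>n. (INF x\<in>C. f x) + inverse (real (Suc n))) \<longlonglongrightarrow> (INF x\<in>C. f x)"
      using tendsto_add[OF tendsto_const LIMSEQ_inverse_real_of_nat] by simp
  qed simp
  with xs(1) that show ?thesis by blast
qed

lemma covariant_channel_nearest_point:
  assumes E1: "is_channel d1 d2 E1" "covariant G d1 U1 U2 E1"
    and U1: "\<And>g. g \<in> carrier G \<Longrightarrow> U1 g \<in> carrier_mat d1 d1"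
    and U2: "\<And>g. g \<in> carrier G \<Longrightarrow> U2 g \<in> carrier_mat d2 d2"
    and \<rho>: "\<rho> \<in> carrier_mat d1 d1" and \<sigma>: "\<sigma> \<in> carrier_mat d2 d2"
  obtains E0 where "is_channel d1 d2 E0" and "covariant G d1 U1 U2 E0"
    and "\<And>E. is_channel d1 d2 E \<Longrightarrow> covariant G d1 U1 U2 E \<Longrightarrow>
      hs_norm2 (E0 \<rho> - \<sigma>) \<le> hs_norm2 (E \<rho> - \<sigma>)"
proof -
  define C where "C = {E. is_channel d1 d2 E \<and> covariant G d1 U1 U2 E}"
  define dist where "dist E = hs_norm2 (E \<rho> - \<sigma>)" for E
  have car: "E \<rho> \<in> carrier_mat d2 d2" if "is_channel d1 d2 E" for E
    using that \<rho> unfolding is_channel_def linear_map_mat_def by blast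
  have "bdd_below (dist ` C)"
    by (rule bdd_belowI[of _ 0])
      (auto simp: dist_def hs_norm2_expand[OF minus_carrier_mat[OF \<sigma>]] intro!: sum_nonneg)
  moreover have "C \<noteq> {}" using E1 by (auto simp: C_def)
  ultimately obtain Es where Es: "\<And>n. Es n \<in> C" and lim_dist: "(\<lambda>n. dist (Es n)) \<longlonglongrightarrow> (INF E\<in>C. dist E)"
    using minimizing_sequence[of C dist] by blast
  have "is_channel d1 d2 (Es n) \<and> covariant G d1 U1 U2 (Es n)" for n
    using Es unfolding C_def by blast
  then obtain r E0 where r: "strict_mono r" and E0: "is_channel d1 d2 E0" "covariant G d1 U1 U2 E0"
    and lim: "\<And>X a b. X \<in> carrier_mat d1 d1 \<Longrightarrow> a < d2 \<Longrightarrow> b < d2 \<Longrightarrow>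
      (\<lambda>n. Es (r n) X $$ (a,b)) \<longlonglongrightarrow> E0 X $$ (a,b)"
    using covariant_channels_convergent_subseq[where Es = Es and G = G and ?U1.0 = U1 and ?U2.0 = U2, OF _ U1 U2]
    by blast
  have "(\<lambda>n. dist (Es (r n))) \<longlonglongrightarrow> dist E0"
    unfolding dist_def
  proof (rule tendsto_hs_norm2)
    show "Es (r n) \<rho> - \<sigma> \<in> carrier_mat d2 d2" "E0 \<rho> - \<sigma> \<in> carrier_mat d2 d2" for n
      using \<sigma> by (simp_all add: minus_carrier_mat)
    show "(\<lambda>n. (Es (r n) \<rho> - \<sigma>) $$ (a,b)) \<longlonglongrightarrow> (E0 \<rho> - \<sigma>) $$ (a,b)" if "a < d2" "b < d2" for a b
      using that \<sigma> lim[OF \<rho> that] by (simp add: tendsto_diff)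
  qed
  moreover have "(\<lambda>n. dist (Es (r n))) \<longlonglongrightarrow> (INF E\<in>C. dist E)"
    using LIMSEQ_subseq_LIMSEQ[OF lim_dist r] by (simp add: comp_def)
  ultimately have "dist E0 = (INF E\<in>C. dist E)" by (rule LIMSEQ_unique)
  moreover have "(INF E\<in>C. dist E) \<le> dist E" if "E \<in> C" for E
    by (rule cINF_lower[OF \<open>bdd_below (dist ` C)\<close> that])
  ultimately show ?thesis using that E0 by (auto simp: C_def dist_def)
qed

lemma covariant_channel_nearest_point_first_order:
  assumes E0: "is_channel d1 d2 E0" "covariant G d1 U1 U2 E0"
    and nearest: "\<And>E. is_channel d1 d2 E \<Longrightarrow> covariant G d1 U1 U2 E \<Longrightarrow>
      hs_norm2 (E0 \<rho> - \<sigma>) \<le> hs_norm2 (E \<rho> - \<sigma>)"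
    and E: "is_channel d1 d2 E" "covariant G d1 U1 U2 E"
    and U2: "\<And>g. g \<in> carrier G \<Longrightarrow> U2 g \<in> carrier_mat d2 d2"
    and \<rho>: "\<rho> \<in> carrier_mat d1 d1" and \<sigma>: "\<sigma> \<in> carrier_mat d2 d2"
  shows "Re (hs_inner (E0 \<rho> - \<sigma>) (E0 \<rho>)) \<le> Re (hs_inner (E0 \<rho> - \<sigma>) (E \<rho>))"
proof (rule hs_nearest_point_first_order[OF _ _ \<sigma>])
  have car: "\<And>X. X \<in> carrier_mat d1 d1 \<Longrightarrow> E0 X \<in> carrier_mat d2 d2"
    "\<And>X. X \<in> carrier_mat d1 d1 \<Longrightarrow> E X \<in> carrier_mat d2 d2"
    using E0 E unfolding is_channel_def linear_map_mat_def by blast+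
  then show "E0 \<rho> \<in> carrier_mat d2 d2" "E \<rho> \<in> carrier_mat d2 d2" using \<rho> by blast+
  fix t :: real assume t: "0 < t" "t \<le> 1"
  have "is_channel d1 d2 (\<lambda>X. complex_of_real t \<cdot>\<^sub>m E X + complex_of_real (1 - t) \<cdot>\<^sub>m E0 X)"
    using is_channel_convex_comb[OF E(1) E0(1)] t by simp
  moreover have "covariant G d1 U1 U2 (\<lambda>X. complex_of_real t \<cdot>\<^sub>m E X + complex_of_real (1 - t) \<cdot>\<^sub>m E0 X)"
    by (rule covariant_lin_comb[OF E(2) E0(2) car(2) car(1) U2])
  ultimately show "hs_norm2 (E0 \<rho> - \<sigma>)
      \<le> hs_norm2 (complex_of_real t \<cdot>\<^sub>m E \<rho> + complex_of_real (1 - t) \<cdot>\<^sub>m E0 \<rho> - \<sigma>)"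
    using nearest by blast
qed

lemma is_state_dim_pos:
  assumes "is_state n \<rho>"
  shows "0 < n"
proof (rule ccontr)
  assume "\<not> 0 < n"
  then have "mtrace \<rho> = 0"
    using is_state_carrier[OF assms] unfolding mtrace_def by fastforce
  then show False using assms unfolding is_state_def by simp
qed

lemma scaled_shift_entry:
  assumes "h \<in> carrier_mat n n" and "a < n" and "b < n"
  shows "(complex_of_real r \<cdot>\<^sub>m (complex_of_real c \<cdot>\<^sub>m 1\<^sub>m n - h)) $$ (a,b)
    = complex_of_real r * ((if a = b then complex_of_real c else 0) - h $$ (a,b))"
  using assms by simp

lemma mtrace_scaled_shift:
  assumes h: "h \<in> carrier_mat n n"
  shows "mtrace (complex_of_real r \<cdot>\<^sub>m (complex_of_real c \<cdot>\<^sub>m 1\<^sub>m n - h))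
    = complex_of_real r * (complex_of_real c * of_nat n - mtrace h)"
  using h unfolding mtrace_def
  by (simp add: scaled_shift_entry[OF h] sum_subtractf sum_distrib_left[symmetric] right_diff_distrib)

lemma hs_inner_scaled_shift:
  assumes h: "h \<in> carrier_mat n n" and X: "X \<in> carrier_mat n n"
  shows "hs_inner (complex_of_real r \<cdot>\<^sub>m (complex_of_real c \<cdot>\<^sub>m 1\<^sub>m n - h)) X
    = complex_of_real r * (complex_of_real c * mtrace X - hs_inner h X)"
proof -
  have M: "complex_of_real r \<cdot>\<^sub>m (complex_of_real c \<cdot>\<^sub>m 1\<^sub>m n - h) \<in> carrier_mat n n"
    by (intro smult_carrier_mat minus_carrier_mat[OF h])
  have "hs_inner (complex_of_real r \<cdot>\<^sub>m (complex_of_real c \<cdot>\<^sub>m 1\<^sub>m n - h)) X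
      = (\<Sum>a<n. \<Sum>b<n. complex_of_real r *
          ((if a = b then complex_of_real c * X $$ (a,b) else 0) - cnj (h $$ (a,b)) * X $$ (a,b)))"
    unfolding hs_inner_expand[OF M X]
    by (intro sum.cong refl) (simp add: scaled_shift_entry[OF h] algebra_simps)
  also have "\<dots> = complex_of_real r * (complex_of_real c * mtrace X - hs_inner h X)"
    unfolding hs_inner_expand[OF h X] mtrace_def using X
    by (simp add: sum_subtractf sum_distrib_left[symmetric] sum.delta' right_diff_distrib)
  finally show ?thesis .
qed

lemma exists_state_reversing_hs_inner:
  assumes \<tau>: "is_state n \<tau>" and \<sigma>: "is_state n \<sigma>"
  obtains \<eta> where "is_state n \<eta>"
    and "\<And>X Y. X \<in> carrier_mat n n \<Longrightarrow> Y \<in> carrier_mat n n \<Longrightarrow> mtrace X = mtrace Y \<Longrightarrow>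
      Re (hs_inner \<eta> Y) \<le> Re (hs_inner \<eta> X) \<longleftrightarrow> Re (hs_inner (\<tau> - \<sigma>) X) \<le> Re (hs_inner (\<tau> - \<sigma>) Y)"
proof -
  define h where "h = \<tau> - \<sigma>"
  define c where "c = 1 + (\<Sum>i<n. \<Sum>j<n. cmod (h $$ (i,j)))"
  define \<eta> where "\<eta> = complex_of_real (1 / (c * n)) \<cdot>\<^sub>m (complex_of_real c \<cdot>\<^sub>m 1\<^sub>m n - h)"
  note \<tau>c = is_state_carrier[OF \<tau>] and \<sigma>c = is_state_carrier[OF \<sigma>]
  have h: "h \<in> carrier_mat n n" unfolding h_def by (rule minus_carrier_mat[OF \<sigma>c])
  have c: "1 \<le> c" unfolding c_def by (simp add: sum_nonneg)
  have n: "0 < n" by (rule is_state_dim_pos[OF \<sigma>])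
  from c n have cn: "0 < c * n" by simp
  have "mtrace h = 0"
    using \<tau> \<sigma> \<tau>c \<sigma>c unfolding is_state_def mtrace_def h_def by (simp add: sum_subtractf)
  then have "mtrace \<eta> = 1"
    using c n unfolding \<eta>_def mtrace_scaled_shift[OF h] by simp
  moreover have "psd n \<eta>"
    unfolding \<eta>_def h_def
    by (rule psd_smult[OF psd_shift_diff]) (use \<tau> \<sigma> cn in \<open>auto simp: is_state_def c_def h_def\<close>)
  moreover have "Re (hs_inner \<eta> Y) \<le> Re (hs_inner \<eta> X) \<longleftrightarrow> Re (hs_inner h X) \<le> Re (hs_inner h Y)"
    if "X \<in> carrier_mat n n" "Y \<in> carrier_mat n n" "mtrace X = mtrace Y" for X Y
    using that cn unfolding \<eta>_def hs_inner_scaled_shift[OF h that(1)] hs_inner_scaled_shift[OF h that(2)]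
    by (simp add: divide_le_cancel)
  ultimately show ?thesis using that unfolding is_state_def h_def by blast
qed

theorem lemma17:
  fixes G :: "('g, 'b) monoid_scheme" and T :: "'g topology"
    and dA dB :: nat and UA UB :: "'g \<Rightarrow> complex mat"
    and \<rho> \<sigma> :: "complex mat"
    and Efam :: "complex mat \<Rightarrow> complex mat \<Rightarrow> complex mat"
  assumes "compact_group G T"
    and "cont_unitary_rep G T dA UA"
    and "cont_unitary_rep G T dB UB"
    and "is_state dA \<rho>"
    and "is_state dB \<sigma>"
    and "\<And>\<eta>. is_state dB \<eta> \<Longrightarrow> is_channel dA dB (Efam \<eta>) \<and> covariant G dA UA UB (Efam \<eta>)"
    and "\<And>\<eta>. is_state dB \<eta> \<Longrightarrow> Re (hs_inner \<eta> (Efam \<eta> \<rho>)) \<ge> Re (hs_inner \<eta> \<sigma>)"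
  shows "\<exists>E. is_channel dA dB E \<and> covariant G dA UA UB E \<and> E \<rho> = \<sigma>"
proof -
  have UA: "\<And>g. g \<in> carrier G \<Longrightarrow> UA g \<in> carrier_mat dA dA"
    and UB: "\<And>g. g \<in> carrier G \<Longrightarrow> UB g \<in> carrier_mat dB dB"
    using assms(2,3) unfolding cont_unitary_rep_def unitary_mat_def by blast+
  note \<rho> = is_state_carrier[OF assms(4)] and \<sigma> = is_state_carrier[OF assms(5)]
  obtain E0 where E0: "is_channel dA dB E0" "covariant G dA UA UB E0"
    and nearest: "\<And>E. is_channel dA dB E \<Longrightarrow> covariant G dA UA UB E \<Longrightarrow>
      hs_norm2 (E0 \<rho> - \<sigma>) \<le> hs_norm2 (E \<rho> - \<sigma>)"
    using covariant_channel_nearest_point[where G = G and ?U1.0 = UA and ?U2.0 = UB, OF _ _ UA UB \<rho> \<sigma>]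
      assms(6)[OF assms(5)] by blast
  have \<tau>: "is_state dB (E0 \<rho>)" by (rule channel_state[OF E0(1) assms(4)])
  obtain \<eta> where \<eta>: "is_state dB \<eta>"
    and reverse: "\<And>X Y. X \<in> carrier_mat dB dB \<Longrightarrow> Y \<in> carrier_mat dB dB \<Longrightarrow> mtrace X = mtrace Y \<Longrightarrow>
      Re (hs_inner \<eta> Y) \<le> Re (hs_inner \<eta> X) \<longleftrightarrow>
      Re (hs_inner (E0 \<rho> - \<sigma>) X) \<le> Re (hs_inner (E0 \<rho> - \<sigma>) Y)"
    using exists_state_reversing_hs_inner[OF \<tau> assms(5)] by blast
  have E\<eta>: "is_channel dA dB (Efam \<eta>)" "covariant G dA UA UB (Efam \<eta>)"
    using assms(6)[OF \<eta>] by blast+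
  have "Re (hs_inner (E0 \<rho> - \<sigma>) (Efam \<eta> \<rho>)) \<le> Re (hs_inner (E0 \<rho> - \<sigma>) \<sigma>)"
    using reverse assms(5,7) \<eta> channel_state[OF E\<eta>(1) assms(4)] is_state_carrier
    unfolding is_state_def by metis
  moreover have "Re (hs_inner (E0 \<rho> - \<sigma>) (E0 \<rho>)) \<le> Re (hs_inner (E0 \<rho> - \<sigma>) (Efam \<eta> \<rho>))"
    by (rule covariant_channel_nearest_point_first_order[OF E0 _ E\<eta> UB \<rho> \<sigma>]) (rule nearest)
  ultimately have "hs_norm2 (E0 \<rho> - \<sigma>) \<le> 0"
    unfolding hs_norm2_def using hs_inner_diff_right[OF minus_carrier_mat[OF \<sigma>] is_state_carrier[OF \<tau>] \<sigma>]
    by simp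
  then have "E0 \<rho> = \<sigma>" by (rule hs_norm2_diff_nonpos_imp_eq[OF is_state_carrier[OF \<tau>] \<sigma>])
  with E0 show ?thesis by blast
qed

end
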